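(* Let $q=2^m$, let $k\in\mathbb{F}_q$ with $Tr(k)=1$, let $i\in\mathbb{F}_{q^2}\setminus\mathbb{F}_q$ with $i^2=i+k$, let $\overline{k}\in\mathbb{F}_q$ with $\overline{k}^4=k$, and let $\alpha=A+iB$, $\beta=C+iD$ with $A,B,C,D\in\mathbb{F}_q$ and $\alpha\beta\neq 0$. Then the following are equivalent: (i) $A=(\eta\overline{k}+\eta+\xi)^2(\eta^2\overline{k}+\eta\xi+\xi^2+1)$, $B=\eta^4\overline{k}+\xi^2\eta^2+\xi\eta^3+\eta^2$, $C=\xi^4$, $D=\eta^4$ for some $\xi,\eta\in\mathbb{F}_q$ with $\eta\neq 0$, $Tr\left(\frac{B}{D}+1+\frac{1}{D^2}+\frac{D}{B^2}\right)=1$, and $\eta^2\overline{k}+\xi^2+\xi\eta+1\notin\{0,\eta^2\}$; (ii) $\beta(1+\alpha^{q+1}+\beta^{q+1})+\alpha^{2q}=0$, $\beta^{q+1}\neq 1$, $Tr\left(\frac{\beta^{q+1}}{\alpha^{q+1}}\right)=0$, and $\beta\in\mathbb{F}_{q^2}\setminus\mathbb{F}_q$.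
   Context: $Tr:\mathbb{F}_q\to\mathbb{F}_2$ is the absolute trace $Tr(z)=z+z^2+\cdots+z^{2^{m-1}}$. *)

theory Defs
  imports Main
begin

text \<open>We work inside a finite field of order q^2 = 2^(2m) (the field F_{q^2});
  the subfield F_q is the set of elements fixed by the Frobenius x \<mapsto> x^q.\<close>

definition subfield_q :: "nat \<Rightarrow> 'a::field set" where
  "subfield_q q = {x. x ^ q = x}"

definition abs_trace :: "nat \<Rightarrow> 'a::field \<Rightarrow> 'a" where
  "abs_trace m z = (\<Sum>j<m. z ^ (2 ^ j))"

end

(*
  Since i^q = i + 1, the norm alpha^(q+1) is
  N(A,B) = A^2 + AB + kB^2, and comparing coordinates in the basis 1, i turns the equation
  in (ii) into D c = B^2 and C c = A^2 + B^2 + kB^2 with c = 1 + N(A,B) + N(C,D).  In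
  characteristic 2 these force N(C,D) c^2 = N(A,B)^2, whence c = w^2, N(A,B) = w^2 (w+1)^2
  and N(C,D) = (w+1)^4 for some w in F_q; taking fourth roots xi, eta of C, D identifies w
  with eta^2 kbar + xi^2 + xi eta + 1, and conversely.  As Tr(kbar) = Tr(k) = 1 and Tr is
  invariant under squaring, both trace conditions reduce to Tr(1/w + 1) = 0.
*)

theory Submission
  imports Defs "HOL-Number_Theory.Residues"
begin

lemma subfield_q_mult: "x \<in> subfield_q q \<Longrightarrow> y \<in> subfield_q q \<Longrightarrow> x * y \<in> subfield_q q"
  by (simp add: subfield_q_def power_mult_distrib)

lemma subfield_q_divide: "x \<in> subfield_q q \<Longrightarrow> y \<in> subfield_q q \<Longrightarrow> x / y \<in> subfield_q q"
  by (simp add: subfield_q_def power_divide)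

lemma subfield_q_power: "x \<in> subfield_q q \<Longrightarrow> x ^ n \<in> subfield_q q"
  by (simp add: subfield_q_def flip: power_mult) (metis mult.commute power_mult)

lemma one_in_subfield_q: "1 \<in> subfield_q q"
  by (simp add: subfield_q_def)

lemma power_four_divide_eq:
  fixes w :: "'a::field"
  assumes "w \<noteq> 0" "w + 1 \<noteq> 0"
  shows "(w + 1)^4 / (w^2 * (w + 1)^2) = (1 / w + 1)^2"
proof -
  have "(w + 1)^4 / (w^2 * (w + 1)^2) = ((w + 1)^2 * (w + 1)^2) / (w^2 * (w + 1)^2)"
    by (simp flip: power_add)
  also have "\<dots> = (w + 1)^2 / w^2"
    using assms(2) by (intro nonzero_mult_divide_mult_cancel_right) simp
  also have "\<dots> = ((w + 1) / w)^2"
    by (rule power_divide[symmetric])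
  also have "(w + 1) / w = 1 / w + 1"
    using assms(1) by (simp add: field_simps)
  finally show ?thesis .
qed

context
  assumes char2: "(2::'a::field) = 0"
begin

lemma char2_add_self: "x + x = (0::'a)"
  by (simp only: mult_2[symmetric] char2 mult_zero_left)

(* With these rules, simp with algebra_simps proves polynomial identities of characteristic 2. *)
lemma char2_numeral_Bit0: "numeral (Num.Bit0 n) = (0::'a)"
  by (simp only: numeral_Bit0 char2_add_self)

lemma char2_numeral_Bit1: "numeral (Num.Bit1 n) = (1::'a)"
  unfolding numeral_Bit1 numeral_Bit0[symmetric] char2_numeral_Bit0 by simp

lemma char2_minus: "- x = (x::'a)"
  by (metis add_eq_0_iff char2_add_self)

lemma char2_diff: "x - y = x + (y::'a)"
  by (simp add: char2_minus)

lemma char2_add_eq_0_iff: "x + y = 0 \<longleftrightarrow> x = (y::'a)"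
  by (metis add_eq_0_iff char2_minus)

lemma CHAR_eq_two: "CHAR('a) = 2"
proof -
  have "CHAR('a) dvd 2"
    using char2 of_nat_eq_0_iff_char_dvd[of 2, where 'a = 'a] by simp
  then show ?thesis
    using CHAR_not_1 two_is_prime_nat by (auto simp: prime_nat_iff)
qed

lemma char2_power_two_power_add: "(x + y) ^ (2 ^ n) = x ^ (2 ^ n) + (y::'a) ^ (2 ^ n)"
  by (rule freshmans_dream') (simp_all add: CHAR_eq_two)

lemma char2_square_add: "(x + y) ^ 2 = x ^ 2 + (y::'a) ^ 2"
  using char2_power_two_power_add[of x y 1] by simp

lemma char2_square_eq_iff: "x ^ 2 = y ^ 2 \<longleftrightarrow> x = (y::'a)"
proof
  assume "x ^ 2 = y ^ 2"
  then have "(x + y) ^ 2 = 0"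
    unfolding char2_square_add char2_add_eq_0_iff .
  then show "x = y"
    by (simp add: char2_add_eq_0_iff)
qed simp

lemma abs_trace_add: "abs_trace m (x + y) = abs_trace m x + abs_trace m (y::'a)"
  by (simp add: abs_trace_def char2_power_two_power_add sum.distrib)

lemma abs_trace_square:
  assumes "z ^ 2 ^ m = (z::'a)"
  shows "abs_trace m (z ^ 2) = abs_trace m z"
proof -
  have "z + abs_trace m (z ^ 2) = (\<Sum>j<Suc m. z ^ 2 ^ j)"
    unfolding abs_trace_def sum.lessThan_Suc_shift by (simp flip: power_mult)
  also have "\<dots> = abs_trace m z + z"
    unfolding abs_trace_def sum.lessThan_Suc assms ..
  finally show ?thesis
    by simp
qed

lemma abs_trace_artin_schreier:
  assumes "z ^ 2 ^ m = (z::'a)"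
  shows "abs_trace m (z ^ 2 + z) = 0"
  using char2 by (simp add: abs_trace_add abs_trace_square assms)

lemma char2_norm_of_squares:
  "(A^2 + B^2 + k*B^2)^2 + (A^2 + B^2 + k*B^2) * B^2 + k * (B^2)^2 = (A^2 + A*B + k*B^2 :: 'a)^2"
  by (simp add: algebra_simps eval_nat_numeral char2_numeral_Bit0 char2_numeral_Bit1)

lemma char2_norm_of_parametrization:
  "(t * (x^2 + e^2 + K^2*e^2))^2 + t * (x^2 + e^2 + K^2*e^2) * (e^2*t) + K^4 * (e^2*t)^2
     = t^2 * (x^2 + x*e + K*e^2 :: 'a)^2"
  by (simp add: algebra_simps eval_nat_numeral char2_numeral_Bit0 char2_numeral_Bit1)

lemma char2_norm_of_fourth_powers:
  "(x^4)^2 + x^4 * e^4 + K^4 * (e^4)^2 = (x^2 + x*e + K*e^2 :: 'a)^4"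
  by (simp add: algebra_simps eval_nat_numeral char2_numeral_Bit0 char2_numeral_Bit1)

lemma char2_norm_sum_eq: "1 + w^2 * (w + 1)^2 + (w + 1)^4 = (w::'a)^2"
  by (simp add: algebra_simps eval_nat_numeral char2_numeral_Bit0 char2_numeral_Bit1)

lemma char2_square_parameter: "(e * K + e + x)^2 = x^2 + e^2 + K^2 * (e^2::'a)"
  by (simp add: char2_square_add power_mult_distrib algebra_simps)

lemma char2_parametrization_iff_factored:
  "(A::'a) = (\<eta> * K + \<eta> + \<xi>)^2 * (\<eta>^2 * K + \<eta> * \<xi> + \<xi>^2 + 1)
     \<longleftrightarrow> A = (\<eta>^2 * K + \<xi>^2 + \<xi> * \<eta> + 1) * (\<xi>^2 + \<eta>^2 + K^2 * \<eta>^2)"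
  "(B::'a) = \<eta>^4 * K + \<xi>^2 * \<eta>^2 + \<xi> * \<eta>^3 + \<eta>^2
     \<longleftrightarrow> B = \<eta>^2 * (\<eta>^2 * K + \<xi>^2 + \<xi> * \<eta> + 1)"
  unfolding char2_square_parameter by (simp_all add: algebra_simps eval_nat_numeral)

lemma char2_norm_equation_solution:
  assumes "s * c = N" and "c = 1 + N + s^2" and "s \<noteq> 1"
  shows "c = 1 + (s::'a)"
proof -
  have "N * (1 + s) + s * (1 + s)^2 = s * c + N"
    using assms(2) by (simp add: algebra_simps eval_nat_numeral char2_numeral_Bit0)
  then have "N * (1 + s) = s * (1 + s)^2"
    using assms(1) char2_add_self char2_add_eq_0_iff by metis
  moreover have "1 + s \<noteq> 0"
    using assms(3) char2_add_eq_0_iff by (metis add.commute)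
  ultimately have "N = s * (1 + s)"
    by (simp add: power2_eq_square)
  then show ?thesis
    using assms(2) by (simp add: algebra_simps power2_eq_square char2_add_self)
qed

end

locale artin_schreier_extension =
  fixes m q :: nat and i k :: "'a::{field,finite}"
  assumes card_UNIV: "card (UNIV :: 'a set) = 2 ^ (2 * m)"
    and q_eq: "q = 2 ^ m"
    and k_in: "k \<in> subfield_q q"
    and i_notin: "i \<notin> subfield_q q"
    and i_square: "i ^ 2 = i + k"
begin

lemma char_two: "(2::'a) = 0"
proof -
  have "of_nat (card (UNIV :: 'a set)) = (0::'a)"
    using CHAR_dvd_CARD of_nat_eq_0_iff_char_dvd by blast
  then show ?thesis
    by (simp add: card_UNIV)
qed

lemma power_q_add: "(x + y) ^ q = x ^ q + (y::'a) ^ q"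
  unfolding q_eq by (rule char2_power_two_power_add[OF char_two])

lemma subfield_q_add:
  "x \<in> subfield_q q \<Longrightarrow> y \<in> subfield_q q \<Longrightarrow> x + y \<in> (subfield_q q :: 'a set)"
  by (simp add: subfield_q_def power_q_add)

lemmas subfield_q_closed =
  subfield_q_add subfield_q_mult subfield_q_divide subfield_q_power one_in_subfield_q

lemma power_two_power_m_eq: "z \<in> subfield_q q \<Longrightarrow> z ^ 2 ^ m = (z::'a)"
  by (simp add: subfield_q_def q_eq)

lemma abs_trace_square_subfield_q: "z \<in> subfield_q q \<Longrightarrow> abs_trace m (z ^ 2) = abs_trace m (z::'a)"
  by (rule abs_trace_square[OF char_two power_two_power_m_eq])

lemma square_root_in_subfield_q:
  assumes "(z::'a) \<in> subfield_q q"
  obtains r where "r \<in> subfield_q q" "r ^ 2 = z"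
proof -
  have "(\<lambda>x. x ^ 2) ` subfield_q q = (subfield_q q :: 'a set)"
    by (rule endo_inj_surj)
      (auto simp: inj_on_def char2_square_eq_iff[OF char_two] intro: subfield_q_power)
  then have "z \<in> (\<lambda>x. x ^ 2) ` subfield_q q"
    using assms by simp
  then show thesis
    using that by blast
qed

lemma fourth_root_in_subfield_q:
  assumes "(z::'a) \<in> subfield_q q"
  obtains r where "r \<in> subfield_q q" "r ^ 4 = z"
proof -
  obtain r1 where "r1 \<in> subfield_q q" "r1 ^ 2 = z"
    using assms square_root_in_subfield_q by blast
  moreover obtain r where "r \<in> subfield_q q" "r ^ 2 = r1"
    using calculation(1) square_root_in_subfield_q by blast
  moreover have "r ^ 4 = (r ^ 2) ^ 2"
    by (simp flip: power_mult)
  ultimately show thesis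
    using that by simp
qed

lemma i_power_q: "i ^ q = i + 1"
proof -
  have "(i ^ q) ^ 2 = (i ^ 2) ^ q"
    by (simp flip: power_mult add: mult.commute)
  also have "\<dots> = i ^ q + k"
    using k_in by (simp add: i_square power_q_add subfield_q_def)
  finally have "(i ^ q) ^ 2 = i ^ q + k" .
  then have "(i ^ q + i) ^ 2 = i ^ q + i"
    by (simp add: char2_square_add[OF char_two] i_square algebra_simps char_two)
  moreover have "i ^ q + i \<noteq> 0"
    using i_notin by (simp add: char2_add_eq_0_iff[OF char_two] subfield_q_def)
  ultimately have "i ^ q + i = 1"
    by (simp add: power2_eq_square)
  then show ?thesis
    by (metis add_diff_cancel_right' add.commute char2_diff[OF char_two])
qed

lemma power_q_coordinates:
  "a \<in> subfield_q q \<Longrightarrow> b \<in> subfield_q q \<Longrightarrow> (a + i * b) ^ q = a + (i + 1) * b"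
  by (simp add: power_q_add power_mult_distrib i_power_q subfield_q_def)

definition rel_norm :: "'a \<Rightarrow> 'a \<Rightarrow> 'a" where
  "rel_norm a b = a ^ 2 + a * b + k * b ^ 2"

lemma rel_norm_in_subfield_q:
  "a \<in> subfield_q q \<Longrightarrow> b \<in> subfield_q q \<Longrightarrow> rel_norm a b \<in> subfield_q q"
  unfolding rel_norm_def by (intro subfield_q_closed k_in)

lemma power_q_plus_1_coordinates:
  assumes "a \<in> subfield_q q" "b \<in> subfield_q q"
  shows "(a + i * b) ^ (q + 1) = rel_norm a b"
proof -
  have "(a + i * b) ^ (q + 1) = (a + (i + 1) * b) * (a + i * b)"
    using power_q_coordinates[OF assms] by simp
  also have "\<dots> = a ^ 2 + a * b + (i ^ 2 - i) * b ^ 2 + 2 * (i * a * b + i * b ^ 2)"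
    by (simp add: algebra_simps power2_eq_square)
  finally show ?thesis
    by (simp add: rel_norm_def i_square char_two)
qed

lemma power_2q_coordinates:
  assumes "a \<in> subfield_q q" "b \<in> subfield_q q"
  shows "(a + i * b) ^ (2 * q) = (a ^ 2 + b ^ 2 + k * b ^ 2) + i * b ^ 2"
proof -
  have "(a + i * b) ^ (2 * q) = (a + (i + 1) * b) ^ 2"
    using power_q_coordinates[OF assms] by (simp add: power_mult mult.commute)
  also have "\<dots> = a ^ 2 + (i ^ 2 + 1) * b ^ 2"
    by (simp add: char2_square_add[OF char_two] power_mult_distrib)
  finally show ?thesis
    by (simp add: i_square algebra_simps)
qed

lemma coordinates_eq_0:
  assumes "a \<in> subfield_q q" "b \<in> subfield_q q" "a + i * b = 0"
  shows "a = 0" and "b = 0"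
proof -
  show "b = 0"
  proof (rule ccontr)
    assume "b \<noteq> 0"
    then have "i = a / b"
      using assms(3) by (simp add: field_simps char2_add_eq_0_iff[OF char_two] add.commute)
    then show False
      using i_notin assms(1,2) subfield_q_divide by metis
  qed
  then show "a = 0"
    using assms(3) by simp
qed

lemma coordinates_in_subfield_q_iff:
  "a \<in> subfield_q q \<Longrightarrow> b \<in> subfield_q q \<Longrightarrow> a + i * b \<in> subfield_q q \<longleftrightarrow> b = 0"
  using power_q_coordinates[of a b] by (auto simp: subfield_q_def algebra_simps)

lemma equation_iff_coordinates:
  assumes A: "A \<in> subfield_q q" "B \<in> subfield_q q" and C: "C \<in> subfield_q q" "D \<in> subfield_q q"
  defines "c \<equiv> 1 + rel_norm A B + rel_norm C D"
  shows "(C + i * D) * (1 + (A + i * B) ^ (q + 1) + (C + i * D) ^ (q + 1)) + (A + i * B) ^ (2 * q) = 0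
    \<longleftrightarrow> C * c = A ^ 2 + B ^ 2 + k * B ^ 2 \<and> D * c = B ^ 2"
proof -
  have "(C + i * D) * (1 + (A + i * B) ^ (q + 1) + (C + i * D) ^ (q + 1)) + (A + i * B) ^ (2 * q)
      = (C * c + (A ^ 2 + B ^ 2 + k * B ^ 2)) + i * (D * c + B ^ 2)"
    unfolding power_q_plus_1_coordinates[OF A] power_q_plus_1_coordinates[OF C]
      power_2q_coordinates[OF A] c_def by (simp add: algebra_simps)
  moreover have "C * c + (A ^ 2 + B ^ 2 + k * B ^ 2) \<in> subfield_q q" "D * c + B ^ 2 \<in> subfield_q q"
    unfolding c_def by (intro subfield_q_closed rel_norm_in_subfield_q A C k_in)+
  ultimately show ?thesis
    using coordinates_eq_0 char2_add_eq_0_iff[OF char_two] by (metis add_0 mult_zero_right)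
qed

lemma abs_trace_norm_ratio:
  assumes "(w::'a) \<in> subfield_q q" "w \<noteq> 0" "w + 1 \<noteq> 0"
  shows "abs_trace m ((w + 1)^4 / (w^2 * (w + 1)^2)) = abs_trace m (1 / w + 1)"
proof -
  have "1 / w + 1 \<in> subfield_q q"
    by (intro subfield_q_closed assms(1))
  then show ?thesis
    using assms(2,3) by (simp add: power_four_divide_eq abs_trace_square_subfield_q)
qed

lemma norms_of_solution:
  assumes A: "A \<in> subfield_q q" "B \<in> subfield_q q" and C: "C \<in> subfield_q q" "D \<in> subfield_q q"
    and eq_C: "C * (1 + rel_norm A B + rel_norm C D) = A^2 + B^2 + k * B^2"
    and eq_D: "D * (1 + rel_norm A B + rel_norm C D) = B^2"
    and norm_C_D: "rel_norm C D \<noteq> 1"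
  obtains t where "t \<in> subfield_q q" "t \<noteq> 0" "1 + rel_norm A B + rel_norm C D = t^2"
    "rel_norm A B = t^2 * (t^2 + 1)" "rel_norm C D = (t^2 + 1)^2"
proof -
  define c where "c = 1 + rel_norm A B + rel_norm C D"
  have c_in: "c \<in> subfield_q q"
    unfolding c_def by (intro subfield_q_closed rel_norm_in_subfield_q A C)
  have "rel_norm C D * c^2 = (C * c)^2 + (C * c) * (D * c) + k * (D * c)^2"
    by (simp add: rel_norm_def algebra_simps power2_eq_square)
  also have "\<dots> = rel_norm A B ^ 2"
    unfolding eq_C[folded c_def] eq_D[folded c_def] rel_norm_def
    by (rule char2_norm_of_squares[OF char_two])
  finally have norm_c: "rel_norm C D * c^2 = rel_norm A B ^ 2" .
  obtain s where s: "s \<in> subfield_q q" "s^2 = rel_norm C D"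
    using square_root_in_subfield_q rel_norm_in_subfield_q[OF C] by blast
  have "(s * c)^2 = rel_norm A B ^ 2"
    using norm_c s(2) by (simp add: power_mult_distrib)
  then have s_c: "s * c = rel_norm A B"
    by (simp add: char2_square_eq_iff[OF char_two])
  have s_ne_1: "s \<noteq> 1"
    using s(2) norm_C_D by auto
  have "c = 1 + rel_norm A B + s^2"
    using c_def s(2) by simp
  then have c_s: "c = 1 + s"
    by (rule char2_norm_equation_solution[OF char_two s_c _ s_ne_1])
  obtain t where t: "t \<in> subfield_q q" "t^2 = c"
    using square_root_in_subfield_q c_in by blast
  have s_t: "s = t^2 + 1"
    using c_s t(2) by (simp add: algebra_simps char_two)
  show thesis
  proof (rule that[OF t(1)])
    show "t \<noteq> 0"
      using c_s t(2) s_ne_1 char2_add_eq_0_iff[OF char_two] by auto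
    show "1 + rel_norm A B + rel_norm C D = t^2"
      using t(2) c_def by simp
    show "rel_norm A B = t^2 * (t^2 + 1)"
      unfolding s_c[symmetric] s_t t(2) by (simp add: mult.commute)
    show "rel_norm C D = (t^2 + 1)^2"
      using s(2) s_t by simp
  qed
qed

context
  fixes K :: 'a
  assumes K_in: "K \<in> subfield_q q" and K_power_4: "K ^ 4 = k"
    and abs_trace_k: "abs_trace m k = 1"
begin

lemma abs_trace_K: "abs_trace m K = 1"
proof -
  have "abs_trace m k = abs_trace m ((K ^ 2) ^ 2)"
    by (simp flip: K_power_4 power_mult)
  also have "\<dots> = abs_trace m (K ^ 2)"
    by (rule abs_trace_square_subfield_q[OF subfield_q_power[OF K_in]])
  also have "\<dots> = abs_trace m K"
    by (rule abs_trace_square_subfield_q[OF K_in])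
  finally show ?thesis
    using abs_trace_k by simp
qed

lemma abs_trace_parameter:
  assumes "\<xi> \<in> subfield_q q" "\<eta> \<in> subfield_q q" "\<eta> \<noteq> 0"
  shows "abs_trace m ((\<eta>^2 * K + \<xi>^2 + \<xi> * \<eta>) / \<eta>^2) = 1"
proof -
  have "(\<eta>^2 * K + \<xi>^2 + \<xi> * \<eta>) / \<eta>^2 = ((\<xi> / \<eta>)^2 + \<xi> / \<eta>) + K"
    using assms(3) by (simp add: field_simps power2_eq_square)
  then have "abs_trace m ((\<eta>^2 * K + \<xi>^2 + \<xi> * \<eta>) / \<eta>^2)
      = abs_trace m ((\<xi> / \<eta>)^2 + \<xi> / \<eta>) + abs_trace m K"
    by (simp only: abs_trace_add[OF char_two, of _ "(\<xi> / \<eta>)^2 + \<xi> / \<eta>"])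
  also have "abs_trace m ((\<xi> / \<eta>)^2 + \<xi> / \<eta>) = 0"
    by (intro abs_trace_artin_schreier[OF char_two] power_two_power_m_eq subfield_q_closed assms(1,2))
  finally show ?thesis
    by (simp add: abs_trace_K)
qed

lemma abs_trace_conditions_iff:
  assumes \<xi>: "\<xi> \<in> subfield_q q" and \<eta>: "\<eta> \<in> subfield_q q" "\<eta> \<noteq> 0"
    and w: "w = \<eta>^2 * K + \<xi>^2 + \<xi> * \<eta> + 1" "w \<noteq> 0" "w + 1 \<noteq> 0"
    and B: "B = \<eta>^2 * w" and D: "D = \<eta>^4"
  shows "abs_trace m (B / D + 1 + 1 / D^2 + D / B^2) = 1
    \<longleftrightarrow> abs_trace m ((w + 1)^4 / (w^2 * (w + 1)^2)) = 0"
proof -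
  define z where "z = 1 / \<eta>^2"
  have z_in: "z \<in> subfield_q q" and w_in: "w \<in> subfield_q q"
    unfolding z_def w by (intro subfield_q_closed K_in \<xi> \<eta>)+
  have "w + 1 = \<eta>^2 * K + \<xi>^2 + \<xi> * \<eta>"
    by (simp add: w algebra_simps char_two)
  then have trace_shift: "abs_trace m ((w + 1) / \<eta>^2) = 1"
    using abs_trace_parameter[OF \<xi> \<eta>] by simp
  have "B / D = (w + 1) / \<eta>^2 + z"
    using \<eta>(2) by (simp add: B D z_def field_simps eval_nat_numeral char_two)
  moreover have "1 / D^2 = (z^2)^2"
    by (simp add: D z_def power_divide flip: power_mult)
  moreover have "D / B^2 = (1 / w)^2"
    using \<eta>(2) w(2) by (simp add: B D field_simps eval_nat_numeral)
  ultimately have "abs_trace m (B / D + 1 + 1 / D^2 + D / B^2)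
      = abs_trace m ((w + 1) / \<eta>^2) + abs_trace m z + abs_trace m 1
        + abs_trace m ((z^2)^2) + abs_trace m ((1 / w)^2)"
    by (simp only: abs_trace_add[OF char_two])
  also have "abs_trace m ((z^2)^2) = abs_trace m z"
    by (simp only: abs_trace_square_subfield_q[OF subfield_q_power[OF z_in]]
        abs_trace_square_subfield_q[OF z_in])
  also have "abs_trace m ((1 / w)^2) = abs_trace m (1 / w)"
    by (intro abs_trace_square_subfield_q subfield_q_closed w_in)
  also have "abs_trace m ((w + 1) / \<eta>^2) + abs_trace m z + abs_trace m 1 + abs_trace m z
      + abs_trace m (1 / w) = 1 + abs_trace m (1 / w + 1)"
    unfolding trace_shift by (simp add: abs_trace_add[OF char_two] algebra_simps char_two)
  finally show ?thesis
    using abs_trace_norm_ratio[OF w_in w(2,3)] by simp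
qed

lemma parameter_ne_square:
  assumes \<xi>: "\<xi> \<in> subfield_q q" and \<eta>: "\<eta> \<in> subfield_q q" "\<eta> \<noteq> 0"
    and w: "w = \<eta>^2 * K + \<xi>^2 + \<xi> * \<eta> + 1" "w \<noteq> 0"
    and trace: "abs_trace m (1 / w + 1) = 0"
  shows "w \<noteq> \<eta>^2"
proof
  assume w_eq: "w = \<eta>^2"
  have "\<eta>^2 * K + \<xi>^2 + \<xi> * \<eta> = w + 1"
    by (simp add: w algebra_simps char_two)
  then have "(\<eta>^2 * K + \<xi>^2 + \<xi> * \<eta>) / \<eta>^2 = 1 / w + 1"
    using w_eq \<eta>(2) by (simp add: field_simps)
  then show False
    using abs_trace_parameter[OF \<xi> \<eta>] trace by simp
qed

lemma parameter_of_solution: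
  assumes "t \<noteq> 0" and norm: "rel_norm A B = t^2 * (t^2 + 1)"
    and A: "A = t * (\<xi>^2 + \<eta>^2 + K^2 * \<eta>^2)" and B: "B = \<eta>^2 * t"
  shows "t = \<eta>^2 * K + \<xi>^2 + \<xi> * \<eta> + 1"
proof -
  have "t^2 * (\<xi>^2 + \<xi> * \<eta> + K * \<eta>^2)^2 = rel_norm A B"
    unfolding rel_norm_def A B unfolding K_power_4[symmetric]
    by (rule char2_norm_of_parametrization[OF char_two, symmetric])
  also have "\<dots> = t^2 * (t + 1)^2"
    using norm char2_square_add[OF char_two, of t 1] by simp
  finally have "(\<xi>^2 + \<xi> * \<eta> + K * \<eta>^2)^2 = (t + 1)^2"
    using assms(1) by simp
  then have shift: "\<xi>^2 + \<xi> * \<eta> + K * \<eta>^2 = t + 1"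
    by (simp add: char2_square_eq_iff[OF char_two])
  have "t = (\<xi>^2 + \<xi> * \<eta> + K * \<eta>^2) + 1"
    unfolding shift by (simp add: char_two)
  then show ?thesis
    by (simp add: algebra_simps)
qed

lemma coordinates_of_solution:
  assumes C: "C \<in> subfield_q q" "D \<in> subfield_q q"
    and eq_C: "C * t^2 = A^2 + B^2 + k * B^2" and eq_D: "D * t^2 = B^2"
  obtains \<xi> \<eta> where "\<xi> \<in> subfield_q q" "C = \<xi>^4" "\<eta> \<in> subfield_q q" "D = \<eta>^4"
    "B = \<eta>^2 * t" "A = t * (\<xi>^2 + \<eta>^2 + K^2 * \<eta>^2)"
proof -
  obtain \<xi> where \<xi>: "\<xi> \<in> subfield_q q" "C = \<xi>^4"
    using fourth_root_in_subfield_q[OF C(1)] by metis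
  obtain \<eta> where \<eta>: "\<eta> \<in> subfield_q q" "D = \<eta>^4"
    using fourth_root_in_subfield_q[OF C(2)] by metis
  have "B^2 = (\<eta>^2 * t)^2"
    using eq_D \<eta>(2) by (simp add: power_mult_distrib flip: power_mult)
  then have B_t: "B = \<eta>^2 * t"
    by (simp add: char2_square_eq_iff[OF char_two])
  have "(A + B + K^2 * B)^2 = (\<xi>^2 * t)^2"
    using eq_C \<xi>(2)
    by (simp add: char2_square_add[OF char_two] power_mult_distrib K_power_4 flip: power_mult)
  then have "A + B + K^2 * B = \<xi>^2 * t"
    by (simp only: char2_square_eq_iff[OF char_two])
  then have "A = \<xi>^2 * t - B - K^2 * B"
    by (simp add: algebra_simps)
  then have "A = t * (\<xi>^2 + \<eta>^2 + K^2 * \<eta>^2)"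
    unfolding char2_diff[OF char_two] B_t by (simp add: algebra_simps)
  with \<xi> \<eta> B_t show thesis
    using that by blast
qed

lemma parametrization_imp_conditions:
  assumes \<xi>: "\<xi> \<in> subfield_q q" and \<eta>: "\<eta> \<in> subfield_q q" "\<eta> \<noteq> 0"
    and w: "w = \<eta>^2 * K + \<xi>^2 + \<xi> * \<eta> + 1" "w \<noteq> 0"
    and A: "A = w * (\<xi>^2 + \<eta>^2 + K^2 * \<eta>^2)" and B: "B = \<eta>^2 * w"
    and C: "C = \<xi>^4" and D: "D = \<eta>^4"
    and trace: "abs_trace m (B / D + 1 + 1 / D^2 + D / B^2) = 1"
    and norm_A_B: "rel_norm A B \<noteq> 0"
  shows "C * (1 + rel_norm A B + rel_norm C D) = A^2 + B^2 + k * B^2"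
    and "D * (1 + rel_norm A B + rel_norm C D) = B^2"
    and "rel_norm C D \<noteq> 1"
    and "abs_trace m (rel_norm C D / rel_norm A B) = 0"
proof -
  have shift: "\<xi>^2 + \<xi> * \<eta> + K * \<eta>^2 = w + 1"
    by (simp add: w algebra_simps char_two)
  have N_A: "rel_norm A B = w^2 * (w + 1)^2"
    unfolding rel_norm_def A B unfolding K_power_4[symmetric]
    unfolding char2_norm_of_parametrization[OF char_two] shift ..
  have N_C: "rel_norm C D = (w + 1)^4"
    unfolding rel_norm_def C D unfolding K_power_4[symmetric]
    unfolding char2_norm_of_fourth_powers[OF char_two] shift ..
  have c: "1 + rel_norm A B + rel_norm C D = w^2"
    unfolding N_A N_C by (rule char2_norm_sum_eq[OF char_two])
  have "A^2 + B^2 + k * B^2 = (A + B + K^2 * B)^2"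
    by (simp add: char2_square_add[OF char_two] power_mult_distrib flip: K_power_4 power_mult)
  also have "A + B + K^2 * B = w * \<xi>^2"
    by (simp add: A B algebra_simps char_two)
  finally have "A^2 + B^2 + k * B^2 = (w * \<xi>^2)^2" .
  then show "C * (1 + rel_norm A B + rel_norm C D) = A^2 + B^2 + k * B^2"
    unfolding c unfolding C by (simp add: power_mult_distrib mult.commute flip: power_mult)
  show "D * (1 + rel_norm A B + rel_norm C D) = B^2"
    unfolding c by (simp add: D B power_mult_distrib flip: power_mult)
  have "rel_norm C D = w^4 + 1"
    using char2_power_two_power_add[OF char_two, of w 1 2] N_C by simp
  then show "rel_norm C D \<noteq> 1"
    using w(2) by simp
  have "w + 1 \<noteq> 0"
    using norm_A_B N_A by auto
  then show "abs_trace m (rel_norm C D / rel_norm A B) = 0"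
    using trace abs_trace_conditions_iff[OF \<xi> \<eta> w _ B D] N_A N_C by simp
qed

lemma conditions_imp_parametrization:
  assumes A: "A \<in> subfield_q q" "B \<in> subfield_q q" and C: "C \<in> subfield_q q" "D \<in> subfield_q q"
    and "D \<noteq> 0" and norm_A_B: "rel_norm A B \<noteq> 0"
    and eq_C: "C * (1 + rel_norm A B + rel_norm C D) = A^2 + B^2 + k * B^2"
    and eq_D: "D * (1 + rel_norm A B + rel_norm C D) = B^2"
    and norm_C_D: "rel_norm C D \<noteq> 1"
    and trace: "abs_trace m (rel_norm C D / rel_norm A B) = 0"
  obtains \<xi> \<eta> w where "\<xi> \<in> subfield_q q" "\<eta> \<in> subfield_q q" "\<eta> \<noteq> 0"
    "w = \<eta>^2 * K + \<xi>^2 + \<xi> * \<eta> + 1" "w \<notin> {0, \<eta>^2}"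
    "A = w * (\<xi>^2 + \<eta>^2 + K^2 * \<eta>^2)" "B = \<eta>^2 * w" "C = \<xi>^4" "D = \<eta>^4"
    "abs_trace m (B / D + 1 + 1 / D^2 + D / B^2) = 1"
proof -
  obtain t where t: "t \<in> subfield_q q" "t \<noteq> 0" "1 + rel_norm A B + rel_norm C D = t^2"
    "rel_norm A B = t^2 * (t^2 + 1)" "rel_norm C D = (t^2 + 1)^2"
    using norms_of_solution[OF A C eq_C eq_D norm_C_D] by blast
  obtain \<xi> \<eta> where \<xi>: "\<xi> \<in> subfield_q q" "C = \<xi>^4" and \<eta>: "\<eta> \<in> subfield_q q" "D = \<eta>^4"
    and B_t: "B = \<eta>^2 * t" and A_t: "A = t * (\<xi>^2 + \<eta>^2 + K^2 * \<eta>^2)"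
    using coordinates_of_solution[OF C eq_C[unfolded t(3)] eq_D[unfolded t(3)]] by blast
  have \<eta>_ne_0: "\<eta> \<noteq> 0"
    using \<eta>(2) \<open>D \<noteq> 0\<close> by simp
  define w where "w = \<eta>^2 * K + \<xi>^2 + \<xi> * \<eta> + 1"
  have t_w: "t = w"
    unfolding w_def by (rule parameter_of_solution[OF t(2) t(4) A_t B_t])
  have square_w: "w^2 + 1 = (w + 1)^2"
    using char2_square_add[OF char_two, of w 1] by simp
  have N_A: "rel_norm A B = w^2 * (w + 1)^2"
    using t(4) unfolding t_w square_w .
  have N_C: "rel_norm C D = (w + 1)^4"
    using t(5) unfolding t_w square_w by (simp flip: power_mult)
  have "w \<noteq> 0" "w + 1 \<noteq> 0"
    using t(2) t_w norm_A_B N_A by auto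
  moreover have B_w: "B = \<eta>^2 * w"
    using B_t t_w by simp
  ultimately have trace_i: "abs_trace m (B / D + 1 + 1 / D^2 + D / B^2) = 1"
    using trace abs_trace_conditions_iff[OF \<xi>(1) \<eta>(1) \<eta>_ne_0 w_def _ _ _ \<eta>(2)] N_A N_C by simp
  have "w \<in> subfield_q q"
    unfolding w_def by (intro subfield_q_closed \<xi>(1) \<eta>(1) K_in)
  then have "abs_trace m (1 / w + 1) = 0"
    using trace abs_trace_norm_ratio \<open>w \<noteq> 0\<close> \<open>w + 1 \<noteq> 0\<close> unfolding N_A N_C by simp
  then have "w \<noteq> \<eta>^2"
    by (rule parameter_ne_square[OF \<xi>(1) \<eta>(1) \<eta>_ne_0 w_def \<open>w \<noteq> 0\<close>])
  then show thesis
    using that[OF \<xi>(1) \<eta>(1) \<eta>_ne_0 w_def _ _ B_w \<xi>(2) \<eta>(2) trace_i] A_t t_w \<open>w \<noteq> 0\<close> by simp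
qed

lemma parametrization_iff_conditions:
  assumes A: "A \<in> subfield_q q" "B \<in> subfield_q q" and C: "C \<in> subfield_q q" "D \<in> subfield_q q"
    and norm_A_B: "rel_norm A B \<noteq> 0"
  shows "(\<exists>\<xi> \<in> subfield_q q. \<exists>\<eta> \<in> subfield_q q. \<eta> \<noteq> 0 \<and>
      A = (\<eta>^2 * K + \<xi>^2 + \<xi> * \<eta> + 1) * (\<xi>^2 + \<eta>^2 + K^2 * \<eta>^2) \<and>
      B = \<eta>^2 * (\<eta>^2 * K + \<xi>^2 + \<xi> * \<eta> + 1) \<and> C = \<xi>^4 \<and> D = \<eta>^4 \<and> B \<noteq> 0 \<and>
      abs_trace m (B / D + 1 + 1 / D^2 + D / B^2) = 1 \<and>
      \<eta>^2 * K + \<xi>^2 + \<xi> * \<eta> + 1 \<notin> {0, \<eta>^2})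
    \<longleftrightarrow> (C * (1 + rel_norm A B + rel_norm C D) = A^2 + B^2 + k * B^2 \<and>
      D * (1 + rel_norm A B + rel_norm C D) = B^2) \<and>
      rel_norm C D \<noteq> 1 \<and> abs_trace m (rel_norm C D / rel_norm A B) = 0 \<and> D \<noteq> 0"
    (is "?parametrized \<longleftrightarrow> ?conditions")
proof
  assume ?parametrized
  then show ?conditions
    using norm_A_B by (elim bexE conjE) (simp add: parametrization_imp_conditions[OF _ _ _ refl])
next
  assume ?conditions
  then obtain \<xi> \<eta> w where "\<xi> \<in> subfield_q q" "\<eta> \<in> subfield_q q" "\<eta> \<noteq> 0"
    "w = \<eta>^2 * K + \<xi>^2 + \<xi> * \<eta> + 1" "w \<notin> {0, \<eta>^2}"
    "A = w * (\<xi>^2 + \<eta>^2 + K^2 * \<eta>^2)" "B = \<eta>^2 * w" "C = \<xi>^4" "D = \<eta>^4"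
    "abs_trace m (B / D + 1 + 1 / D^2 + D / B^2) = 1"
    using conditions_imp_parametrization[OF A C _ norm_A_B] by blast
  then show ?parametrized
    by auto
qed

end

end

theorem proposition3:
  fixes m :: nat and q :: nat
    and k i kbar A B C D \<alpha> \<beta> :: "'a::{field,finite}"
  assumes card: "card (UNIV :: 'a set) = 2 ^ (2 * m)"
    and q_def: "q = 2 ^ m"
    and k_in: "k \<in> subfield_q q" and tr_k: "abs_trace m k = 1"
    and i_notin: "i \<notin> subfield_q q" and i_sq: "i ^ 2 = i + k"
    and kbar_in: "kbar \<in> subfield_q q" and kbar_4: "kbar ^ 4 = k"
    and ABCD: "A \<in> subfield_q q" "B \<in> subfield_q q" "C \<in> subfield_q q" "D \<in> subfield_q q"
    and alpha_def: "\<alpha> = A + i * B" and beta_def: "\<beta> = C + i * D"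
    and nz: "\<alpha> * \<beta> \<noteq> 0"
  shows "(\<exists>\<xi> \<in> subfield_q q. \<exists>\<eta> \<in> subfield_q q. \<eta> \<noteq> 0 \<and>
            A = (\<eta> * kbar + \<eta> + \<xi>) ^ 2 * (\<eta> ^ 2 * kbar + \<eta> * \<xi> + \<xi> ^ 2 + 1) \<and>
            B = \<eta> ^ 4 * kbar + \<xi> ^ 2 * \<eta> ^ 2 + \<xi> * \<eta> ^ 3 + \<eta> ^ 2 \<and>
            C = \<xi> ^ 4 \<and> D = \<eta> ^ 4 \<and>
            B \<noteq> 0 \<and>
            abs_trace m (B / D + 1 + 1 / D ^ 2 + D / B ^ 2) = 1 \<and>
            \<eta> ^ 2 * kbar + \<xi> ^ 2 + \<xi> * \<eta> + 1 \<notin> {0, \<eta> ^ 2})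
     \<longleftrightarrow>
         (\<beta> * (1 + \<alpha> ^ (q + 1) + \<beta> ^ (q + 1)) + \<alpha> ^ (2 * q) = 0 \<and>
          \<beta> ^ (q + 1) \<noteq> 1 \<and>
          abs_trace m (\<beta> ^ (q + 1) / \<alpha> ^ (q + 1)) = 0 \<and>
          \<beta> \<notin> subfield_q q)"
proof -
  interpret artin_schreier_extension m q i k
    using card q_def k_in i_notin i_sq by unfold_locales
  have "rel_norm A B \<noteq> 0"
    using nz unfolding alpha_def power_q_plus_1_coordinates[OF ABCD(1,2), symmetric] by simp
  show ?thesis
    unfolding alpha_def beta_def unfolding equation_iff_coordinates[OF ABCD]
    unfolding power_q_plus_1_coordinates[OF ABCD(1,2)] power_q_plus_1_coordinates[OF ABCD(3,4)]
      coordinates_in_subfield_q_iff[OF ABCD(3,4)] char2_parametrization_iff_factored[OF char_two]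
    by (rule parametrization_iff_conditions[OF kbar_in kbar_4 tr_k ABCD \<open>rel_norm A B \<noteq> 0\<close>])
qed

end
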